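(* For integers $n,k$, let $B(n,k)$ be the number of partitions $\lambda\in\mathcal{H}_n$ with $\mathrm{even}(\lambda)=k$ (so $B(n,k)=0$ if $k<0$ or $n\le 0$). Then $B(1,0)=1$ and for all $n\ge 2$ and all integers $k$, $$B(n,k)=B(n-1,k)+B(n-1,k-1)+B(n-2,k)-B(n-2,k-1).$$
   Context: A partition is a finite nonempty weakly decreasing sequence $\lambda=(\lambda_1,\ldots,\lambda_k)$ of positive integers; $\ell(\lambda)=k$ is its number of parts. The perimeter is $\Gamma(\lambda)=\lambda_1+\ell(\lambda)-1$; $\mathcal{H}_n$ is the set of partitions with perimeter $n$ (empty for $n\le 0$). $\mathrm{even}(\lambda)=|\{1\le i\le \ell(\lambda):\lambda_i\text{ is even}\}|$. *)

theory Defs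
  imports Main
begin

definition is_partition :: "nat list \<Rightarrow> bool" where
  "is_partition xs \<longleftrightarrow> xs \<noteq> [] \<and> sorted_wrt (\<ge>) xs \<and> (\<forall>x\<in>set xs. 0 < x)"

definition perimeter :: "nat list \<Rightarrow> int" where
  "perimeter xs = int (hd xs) + int (length xs) - 1"

definition H :: "int \<Rightarrow> nat list set" where
  "H n = {xs. is_partition xs \<and> perimeter xs = n}"

definition num_even :: "nat list \<Rightarrow> nat" where
  "num_even xs = length (filter even xs)"

definition B :: "int \<Rightarrow> int \<Rightarrow> int" where
  "B n k = int (card {xs \<in> H n. int (num_even xs) = k})"

end

theory Submission
  imports Defs
begin

text \<open>
  For n \<ge> 1 every partition of perimeter n + 1 arises in exactly one way from a partition of
  perimeter n, either by repeating its largest part or by increasing its largest part by one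
  (according as its largest part occurs more than once or not).
  Repeating adds an even part iff the largest part is even; increasing flips the parity of the
  largest part. Splitting B n k by the parity of the largest part therefore gives two first-order
  recurrences: the partitions with even largest part are counted by B (n - 1) (k - 1), and
  eliminating the odd ones yields the stated second-order recurrence.
\<close>

definition repeat_largest :: "nat list \<Rightarrow> nat list" where
  "repeat_largest xs = hd xs # xs"

definition increment_largest :: "nat list \<Rightarrow> nat list" where
  "increment_largest xs = Suc (hd xs) # tl xs"

lemma Cons_in_H_iff:
  "y # ys \<in> H n \<longleftrightarrow>
     0 < y \<and> (\<forall>z\<in>set ys. 0 < z \<and> z \<le> y) \<and> sorted_wrt (\<ge>) ys \<and> n = int y + int (length ys)"
  unfolding H_def is_partition_def perimeter_def by auto

lemma HE:
  assumes "xs \<in> H n"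
  obtains y ys where "xs = y # ys" "0 < y" "\<forall>z\<in>set ys. 0 < z \<and> z \<le> y"
    "sorted_wrt (\<ge>) ys" "n = int y + int (length ys)"
  using assms by (cases xs) (auto simp: H_def is_partition_def perimeter_def)

lemma H_not_Nil: "xs \<in> H n \<Longrightarrow> xs \<noteq> []"
  by (auto elim: HE)

lemma H_nonpos: "n \<le> 0 \<Longrightarrow> H n = {}"
  by (auto elim!: HE)

lemma H_1: "H 1 = {[1]}"
proof -
  have "xs = [1]" if "xs \<in> H 1" for xs
  proof -
    obtain y ys where "xs = y # ys" "0 < y" "1 = int y + int (length ys)"
      using \<open>xs \<in> H 1\<close> by (rule HE)
    then have "xs = y # ys" "y = 1" "length ys = 0"
      by linarith+
    then show ?thesis
      by simp
  qed
  then show ?thesis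
    by (auto simp: Cons_in_H_iff)
qed

lemma finite_H: "finite (H n)"
proof (rule finite_subset)
  show "H n \<subseteq> {xs. set xs \<subseteq> {0..nat n} \<and> length xs \<le> nat n}"
  proof
    fix xs assume "xs \<in> H n"
    then obtain y ys where "xs = y # ys" "0 < y" "\<forall>z\<in>set ys. 0 < z \<and> z \<le> y"
      "sorted_wrt (\<ge>) ys" "n = int y + int (length ys)"
      by (rule HE)
    then show "xs \<in> {xs. set xs \<subseteq> {0..nat n} \<and> length xs \<le> nat n}"
      by (auto simp: nat_int_add intro: trans_le_add1)
  qed
  show "finite {xs. set xs \<subseteq> {0..nat n} \<and> length xs \<le> nat n}"
    by (rule finite_lists_length_le) auto
qed

lemma repeat_largest_in_H: "xs \<in> H n \<Longrightarrow> repeat_largest xs \<in> H (n + 1)"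
  by (auto elim!: HE simp: Cons_in_H_iff repeat_largest_def)

lemma increment_largest_in_H:
  assumes "xs \<in> H n"
  shows "increment_largest xs \<in> H (n + 1)"
proof -
  obtain y ys where "xs = y # ys" "0 < y" "\<forall>z\<in>set ys. 0 < z \<and> z \<le> y"
    "sorted_wrt (\<ge>) ys" "n = int y + int (length ys)"
    using assms by (rule HE)
  then show ?thesis
    by (simp add: Cons_in_H_iff increment_largest_def le_Suc_eq)
qed

lemma H_Suc_eq:
  assumes "n \<ge> 1"
  shows "H (n + 1) = repeat_largest ` H n \<union> increment_largest ` H n"
proof
  show "repeat_largest ` H n \<union> increment_largest ` H n \<subseteq> H (n + 1)"
    using repeat_largest_in_H increment_largest_in_H by blast
next
  show "H (n + 1) \<subseteq> repeat_largest ` H n \<union> increment_largest ` H n"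
  proof
    fix xs assume "xs \<in> H (n + 1)"
    then obtain y ys where xs: "xs = y # ys" and y: "0 < y" "\<forall>z\<in>set ys. 0 < z \<and> z \<le> y"
      and ys: "sorted_wrt (\<ge>) ys" and len: "n + 1 = int y + int (length ys)"
      by (rule HE)
    show "xs \<in> repeat_largest ` H n \<union> increment_largest ` H n"
    proof (cases "ys \<noteq> [] \<and> hd ys = y")
      case True
      then obtain zs where zs: "ys = y # zs"
        by (cases ys) auto
      have "ys \<in> H n"
        using zs y ys len by (simp add: Cons_in_H_iff)
      moreover have "xs = repeat_largest ys"
        using xs zs by (simp add: repeat_largest_def)
      ultimately show ?thesis by blast
    next
      case False
      have "\<forall>z\<in>set ys. z < y"
        using False y ys by (cases ys) fastforce+
      moreover have "y \<ge> 2"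
        using False y len assms by (cases ys) fastforce+
      ultimately have "(y - 1) # ys \<in> H n" "xs = increment_largest ((y - 1) # ys)"
        using xs y ys len by (auto simp: Cons_in_H_iff increment_largest_def)
      then show ?thesis by blast
    qed
  qed
qed

lemma inj_repeat_largest: "inj repeat_largest"
  by (rule injI) (simp add: repeat_largest_def)

lemma inj_on_increment_largest: "inj_on increment_largest (H n)"
  by (rule inj_onI) (auto elim!: HE simp: increment_largest_def)

lemma repeat_largest_neq_increment_largest:
  "xs \<in> H m \<Longrightarrow> ys \<in> H n \<Longrightarrow> repeat_largest ys \<noteq> increment_largest xs"
  by (auto elim!: HE simp: repeat_largest_def increment_largest_def)

lemma card_H_Suc_filter:
  assumes "n \<ge> 1"
  shows "card {xs \<in> H (n + 1). P xs} =
           card {xs \<in> H n. P (repeat_largest xs)} + card {xs \<in> H n. P (increment_largest xs)}"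
proof -
  have "{xs \<in> H (n + 1). P xs} =
          repeat_largest ` {xs \<in> H n. P (repeat_largest xs)} \<union>
          increment_largest ` {xs \<in> H n. P (increment_largest xs)}"
    using H_Suc_eq[OF assms] by auto
  also have "card \<dots> =
          card (repeat_largest ` {xs \<in> H n. P (repeat_largest xs)}) +
          card (increment_largest ` {xs \<in> H n. P (increment_largest xs)})"
    by (rule card_Un_disjoint) (use finite_H repeat_largest_neq_increment_largest in auto)
  also have "\<dots> = card {xs \<in> H n. P (repeat_largest xs)} + card {xs \<in> H n. P (increment_largest xs)}"
    by (simp add: card_image inj_on_subset[OF inj_on_increment_largest Collect_restrict]
        inj_on_subset[OF inj_repeat_largest])
  finally show ?thesis .
qed

lemma hd_repeat_largest: "hd (repeat_largest xs) = hd xs"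
  by (simp add: repeat_largest_def)

lemma hd_increment_largest: "hd (increment_largest xs) = Suc (hd xs)"
  by (simp add: increment_largest_def)

lemma num_even_repeat_largest:
  "num_even (repeat_largest xs) = num_even xs + (if even (hd xs) then 1 else 0)"
  by (simp add: num_even_def repeat_largest_def)

lemma num_even_increment_largest:
  "xs \<noteq> [] \<Longrightarrow>
     int (num_even (increment_largest xs)) = int (num_even xs) + (if even (hd xs) then -1 else 1)"
  by (auto simp: neq_Nil_conv num_even_def increment_largest_def)

definition B_lead :: "int \<Rightarrow> int \<Rightarrow> bool \<Rightarrow> int" where
  "B_lead n k e = int (card {xs \<in> H n. int (num_even xs) = k \<and> even (hd xs) = e})"

lemma B_eq_B_lead: "B n k = B_lead n k True + B_lead n k False"
proof -
  have "{xs \<in> H n. int (num_even xs) = k} =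
          {xs \<in> H n. int (num_even xs) = k \<and> even (hd xs)} \<union>
          {xs \<in> H n. int (num_even xs) = k \<and> odd (hd xs)}"
    by auto
  moreover have "card \<dots> =
          card {xs \<in> H n. int (num_even xs) = k \<and> even (hd xs)} +
          card {xs \<in> H n. int (num_even xs) = k \<and> odd (hd xs)}"
    by (rule card_Un_disjoint) (auto simp: finite_H)
  ultimately show ?thesis
    unfolding B_def B_lead_def by simp
qed

lemma B_lead_Suc_even:
  assumes "n \<ge> 1"
  shows "B_lead (n + 1) k True = B n (k - 1)"
proof -
  have "{xs \<in> H n. int (num_even (repeat_largest xs)) = k \<and> even (hd (repeat_largest xs))} =
          {xs \<in> H n. int (num_even xs) = k - 1 \<and> even (hd xs)}"
    by (auto simp: num_even_repeat_largest hd_repeat_largest)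
  moreover have
    "{xs \<in> H n. int (num_even (increment_largest xs)) = k \<and> even (hd (increment_largest xs))} =
       {xs \<in> H n. int (num_even xs) = k - 1 \<and> odd (hd xs)}"
    using H_not_Nil by (auto simp: num_even_increment_largest hd_increment_largest)
  ultimately show ?thesis
    unfolding B_lead_def card_H_Suc_filter[OF assms] by (simp add: B_eq_B_lead B_lead_def)
qed

lemma B_lead_Suc_odd:
  assumes "n \<ge> 1"
  shows "B_lead (n + 1) k False = B_lead n k False + B_lead n (k + 1) True"
proof -
  have "{xs \<in> H n. int (num_even (repeat_largest xs)) = k \<and> odd (hd (repeat_largest xs))} =
          {xs \<in> H n. int (num_even xs) = k \<and> odd (hd xs)}"
    by (auto simp: num_even_repeat_largest hd_repeat_largest)
  moreover have
    "{xs \<in> H n. int (num_even (increment_largest xs)) = k \<and> odd (hd (increment_largest xs))} =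
       {xs \<in> H n. int (num_even xs) = k + 1 \<and> even (hd xs)}"
    using H_not_Nil by (auto simp: num_even_increment_largest hd_increment_largest)
  ultimately show ?thesis
    unfolding B_lead_def card_H_Suc_filter[OF assms] by simp
qed

lemma B_lead_even:
  assumes "n \<ge> 1"
  shows "B_lead n k True = B (n - 1) (k - 1)"
proof (cases "n = 1")
  case True
  then show ?thesis
    by (simp add: B_lead_def B_def H_1 H_nonpos)
next
  case False
  then show ?thesis
    using B_lead_Suc_even[of "n - 1" k] assms by simp
qed

theorem lemma2p2:
  shows "B 1 0 = 1 \<and>
    (\<forall>n k. n \<ge> 2 \<longrightarrow> B n k = B (n - 1) k + B (n - 1) (k - 1) + B (n - 2) k - B (n - 2) (k - 1))"
proof (intro conjI allI impI)
  have "{xs \<in> H 1. int (num_even xs) = 0} = {[1]}"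
    by (auto simp: H_1 num_even_def)
  then show "B 1 0 = 1"
    by (simp add: B_def)
next
  fix n k :: int
  assume "n \<ge> 2"
  then have "n - 1 \<ge> 1" by simp
  have "B n k = B_lead n k True + B_lead n k False"
    by (rule B_eq_B_lead)
  also have "\<dots> = B (n - 1) (k - 1) + B_lead (n - 1) k False + B_lead (n - 1) (k + 1) True"
    using B_lead_even[of n k] B_lead_Suc_odd[OF \<open>n - 1 \<ge> 1\<close>, of k] \<open>n \<ge> 2\<close> by simp
  also have "B_lead (n - 1) k False = B (n - 1) k - B (n - 2) (k - 1)"
    using B_eq_B_lead[of "n - 1" k] B_lead_even[OF \<open>n - 1 \<ge> 1\<close>, of k] by simp
  also have "B_lead (n - 1) (k + 1) True = B (n - 2) k"
    using B_lead_even[OF \<open>n - 1 \<ge> 1\<close>, of "k + 1"] by simp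
  finally show "B n k = B (n - 1) k + B (n - 1) (k - 1) + B (n - 2) k - B (n - 2) (k - 1)"
    by simp
qed

end
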